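(* Let $A$ be a complex unital semi-prime Banach algebra, let $J$ be a (two-sided) ideal of $A$, let $\pi:A\to A/J$ be the canonical projection, and let $\tau:J\to\mathbb{C}$ be a trace on $J$. Let $a\in A$ be a B-Fredholm element of $A$ modulo $J$. Then for every $a_0\in A$ such that $\pi(a_0)$ is the Drazin inverse of $\pi(a)$ in $A/J$, one has $aa_0-a_0a\in J$. Moreover, the number $\tau(aa_0-a_0a)$ is the same for all such $a_0$. Consequently the index $\mathbf{i}(a)=\tau(aa_0-a_0a)$ is well defined and independent of the choice of $a_0$.
   Context: A Banach algebra $A$ is semi-prime if, for $u\in A$, $uxu=0$ for all $x\in A$ implies $u=0$. A nonzero element $p$ of a semi-prime algebra $A$ has rank one if there is a linear functional $f_p$ on $A$ with $pxp=f_p(x)p$ for all $x\in A$. An element $x$ of an algebra $B$ is Drazin invertible if there exist $y\in B$ and $k\ge 1$ with $xy=yx$, $yxy=y$, and $x^kyx=x^k$; such $y$ is unique and is called the Drazin inverse of $x$. An element $a\in A$ is a B-Fredholm element of $A$ modulo $J$ if $\pi(a)$ is Drazin invertible in the quotient algebra $A/J$ (the quotient is not required to be a Banach algebra). A trace on $J$ is a function $\tau:J\to\mathbb{C}$ such that: (1) $\tau(p)=1$ for every idempotent $p\in J$ of rank one; (2) $\tau(a+b)=\tau(a)+\tau(b)$ for $a,b\in J$; (3) $\tau(\alpha a)=\alpha\tau(a)$ for $\alpha\in\mathbb{C}$, $a\in J$; (4) $\tau(ab)=\tau(ba)$ for all $a\in J$, $b\in A$. *)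

theory Defs
  imports "HOL-Analysis.Analysis"
begin

text \<open>Complex unital Banach algebras: a real unital Banach algebra with a compatible
  complex scalar multiplication (the distribution has no complex vector space class).\<close>
class complex_banach_algebra_1 = banach + real_normed_algebra_1 +
  fixes scaleC :: "complex \<Rightarrow> 'a \<Rightarrow> 'a"
  assumes scaleC_add_right: "scaleC c (x + y) = scaleC c x + scaleC c y"
    and scaleC_add_left: "scaleC (c + d) x = scaleC c x + scaleC d x"
    and scaleC_scaleC: "scaleC c (scaleC d x) = scaleC (c * d) x"
    and scaleC_one: "scaleC 1 x = x"
    and scaleR_scaleC: "scaleR r x = scaleC (complex_of_real r) x"
    and mult_scaleC_left: "scaleC c x * y = scaleC c (x * y)"
    and mult_scaleC_right: "x * scaleC c y = scaleC c (x * y)"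
    and norm_scaleC: "norm (scaleC c x) = cmod c * norm x"

definition semi_prime :: "'a::complex_banach_algebra_1 itself \<Rightarrow> bool" where
  "semi_prime _ \<longleftrightarrow> (\<forall>u::'a. (\<forall>x. u * x * u = 0) \<longrightarrow> u = 0)"

definition clinear_functional :: "('a::complex_banach_algebra_1 \<Rightarrow> complex) \<Rightarrow> bool" where
  "clinear_functional f \<longleftrightarrow> (\<forall>x y. f (x + y) = f x + f y) \<and> (\<forall>c x. f (scaleC c x) = c * f x)"

definition rank_one :: "'a::complex_banach_algebra_1 \<Rightarrow> bool" where
  "rank_one p \<longleftrightarrow> p \<noteq> 0 \<and> (\<exists>f. clinear_functional f \<and> (\<forall>x. p * x * p = scaleC (f x) p))"

definition alg_ideal :: "'a::complex_banach_algebra_1 set \<Rightarrow> bool" where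
  "alg_ideal J \<longleftrightarrow> 0 \<in> J \<and> (\<forall>x\<in>J. \<forall>y\<in>J. x + y \<in> J) \<and> (\<forall>c. \<forall>x\<in>J. scaleC c x \<in> J)
     \<and> (\<forall>x\<in>J. \<forall>a. a * x \<in> J \<and> x * a \<in> J)"

text \<open>pi(y) is the Drazin inverse of pi(x) in A/J, written out via pi(u) = pi(v) iff u - v in J.\<close>
definition drazin_inverse_mod :: "'a::complex_banach_algebra_1 set \<Rightarrow> 'a \<Rightarrow> 'a \<Rightarrow> bool" where
  "drazin_inverse_mod J x y \<longleftrightarrow>
     (\<exists>k::nat. k \<ge> 1 \<and> x * y - y * x \<in> J \<and> y * x * y - y \<in> J \<and> x ^ k * y * x - x ^ k \<in> J)"

definition B_Fredholm_mod :: "'a::complex_banach_algebra_1 set \<Rightarrow> 'a \<Rightarrow> bool" where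
  "B_Fredholm_mod J a \<longleftrightarrow> (\<exists>y. drazin_inverse_mod J a y)"

definition is_trace :: "'a::complex_banach_algebra_1 set \<Rightarrow> ('a \<Rightarrow> complex) \<Rightarrow> bool" where
  "is_trace J \<tau> \<longleftrightarrow>
     (\<forall>p\<in>J. p * p = p \<and> rank_one p \<longrightarrow> \<tau> p = 1)
   \<and> (\<forall>a\<in>J. \<forall>b\<in>J. \<tau> (a + b) = \<tau> a + \<tau> b)
   \<and> (\<forall>\<alpha>. \<forall>a\<in>J. \<tau> (scaleC \<alpha> a) = \<alpha> * \<tau> a)
   \<and> (\<forall>a\<in>J. \<forall>b. \<tau> (a * b) = \<tau> (b * a))"

end

theory Submission
  imports Defs
begin

text \<open>Modulo the ideal the Drazin inverse is unique: if \<open>\<pi>(y)\<close> and \<open>\<pi>(z)\<close> are Drazin inverses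
  of \<open>\<pi>(x)\<close>, then for a common index \<open>m\<close> both \<open>y\<close> and \<open>z\<close> are congruent to \<open>y x z\<close>, using
  \<open>y \<sim> y\<^sup>m\<^sup>+\<^sup>1 x\<^sup>m\<close>, \<open>x\<^sup>m \<sim> x\<^sup>m\<^sup>+\<^sup>1 z\<close> and the symmetric relations.
  So two choices \<open>a\<^sub>0, a\<^sub>1\<close> differ by some \<open>d \<in> J\<close>, the two commutators differ by \<open>a d - d a\<close>,
  and its trace vanishes since \<open>\<tau>(a d) = \<tau>(d a)\<close>.\<close>

locale ring_ideal =
  fixes J :: "'a::ring_1 set"
  assumes zero_mem: "0 \<in> J"
    and add_mem: "u \<in> J \<Longrightarrow> v \<in> J \<Longrightarrow> u + v \<in> J"
    and uminus_mem: "u \<in> J \<Longrightarrow> - u \<in> J"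
    and mult_left_mem: "u \<in> J \<Longrightarrow> a * u \<in> J"
    and mult_right_mem: "u \<in> J \<Longrightarrow> u * a \<in> J"
begin

lemma diff_mem: "u \<in> J \<Longrightarrow> v \<in> J \<Longrightarrow> u - v \<in> J"
  using add_mem[OF _ uminus_mem, of u v] by simp

definition cong :: "'a \<Rightarrow> 'a \<Rightarrow> bool" (infix "\<sim>" 50) where
  "u \<sim> v \<longleftrightarrow> u - v \<in> J"

lemma cong_refl [simp]: "u \<sim> u"
  using zero_mem by (simp add: cong_def)

lemma cong_sym: "u \<sim> v \<Longrightarrow> v \<sim> u"
  using uminus_mem unfolding cong_def by fastforce

lemma cong_trans [trans]: "u \<sim> v \<Longrightarrow> v \<sim> w \<Longrightarrow> u \<sim> w"
  using add_mem unfolding cong_def by fastforce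

lemma cong_mult: "u \<sim> u' \<Longrightarrow> v \<sim> v' \<Longrightarrow> u * v \<sim> u' * v'"
proof -
  assume "u \<sim> u'" "v \<sim> v'"
  moreover have "u * v - u' * v' = (u - u') * v + u' * (v - v')"
    by (simp add: algebra_simps)
  ultimately show ?thesis
    by (simp add: cong_def add_mem mult_left_mem mult_right_mem)
qed

lemma cong_mult_left: "v \<sim> v' \<Longrightarrow> u * v \<sim> u * v'"
  by (simp add: cong_mult)

lemma cong_mult_right: "u \<sim> u' \<Longrightarrow> u * v \<sim> u' * v"
  by (simp add: cong_mult)

lemma cong_power_commute:
  assumes "x * y \<sim> y * x"
  shows "x ^ n * y \<sim> y * x ^ n"
proof (induction n)
  case 0
  show ?case by simp
next
  case (Suc n)
  have "x ^ Suc n * y = x * (x ^ n * y)"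
    by (simp add: mult.assoc)
  also have "\<dots> \<sim> x * (y * x ^ n)"
    using Suc by (rule cong_mult_left)
  also have "\<dots> = (x * y) * x ^ n"
    by (simp add: mult.assoc)
  also have "\<dots> \<sim> (y * x) * x ^ n"
    using assms by (rule cong_mult_right)
  also have "\<dots> = y * x ^ Suc n"
    by (simp add: mult.assoc)
  finally show ?case .
qed

lemma cong_powers_commute: "x * y \<sim> y * x \<Longrightarrow> x ^ m * y ^ n \<sim> y ^ n * x ^ m"
  by (rule cong_sym, rule cong_power_commute, rule cong_sym, rule cong_power_commute)

context
  fixes x y :: 'a
  assumes commute: "x * y \<sim> y * x" and outer: "y * x * y \<sim> y"
begin

lemma drazin_eq_square_mult: "y \<sim> y * y * x"
proof -
  have "y \<sim> y * x * y"
    using outer by (rule cong_sym)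
  also have "\<dots> = y * (x * y)"
    by (simp add: mult.assoc)
  also have "\<dots> \<sim> y * (y * x)"
    using commute by (rule cong_mult_left)
  finally show ?thesis
    by (simp add: mult.assoc)
qed

lemma drazin_eq_power_mult_power: "y \<sim> y ^ Suc n * x ^ n"
proof (induction n)
  case 0
  show ?case by simp
next
  case (Suc n)
  note Suc
  also have "y ^ Suc n * x ^ n = y ^ n * y * x ^ n"
    by (simp add: power_commutes)
  also have "\<dots> \<sim> y ^ n * (y * y * x) * x ^ n"
    using drazin_eq_square_mult by (intro cong_mult_right cong_mult_left)
  also have "\<dots> = y ^ Suc (Suc n) * x ^ Suc n"
    by (metis mult.assoc power_Suc power_Suc2)
  finally show ?case .
qed

lemma drazin_power_mult_power_eq: "y ^ Suc n * x ^ Suc n \<sim> y * x"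
proof (induction n)
  case 0
  show ?case by simp
next
  case (Suc n)
  have "y ^ Suc (Suc n) * x ^ Suc (Suc n) = y * (y ^ Suc n * x ^ Suc n) * x"
    by (simp add: mult.assoc power_commutes)
  also have "\<dots> \<sim> y * (y * x) * x"
    using Suc by (intro cong_mult_right cong_mult_left)
  also have "\<dots> = y * y * x * x"
    by (simp add: mult.assoc)
  also have "\<dots> \<sim> y * x"
    using cong_sym[OF drazin_eq_square_mult] by (rule cong_mult_right)
  finally show ?case .
qed

end

lemma drazin_index_mono:
  assumes "x ^ k * y * x \<sim> x ^ k" and "k \<le> m"
  shows "x ^ m * y * x \<sim> x ^ m"
proof -
  have "x ^ (m - k) * (x ^ k * y * x) \<sim> x ^ (m - k) * x ^ k"
    using assms(1) by (rule cong_mult_left)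
  moreover have "x ^ (m - k) * x ^ k = x ^ m"
    using assms(2) by (simp flip: power_add)
  ultimately show ?thesis
    by (metis mult.assoc)
qed

lemma drazin_power_eq_power_mult:
  assumes "x * z \<sim> z * x" and "x ^ m * z * x \<sim> x ^ m"
  shows "x ^ m \<sim> x ^ Suc m * z"
proof -
  have "x ^ m \<sim> x ^ m * (z * x)"
    using assms(2) by (simp add: cong_sym mult.assoc)
  also have "\<dots> \<sim> x ^ m * (x * z)"
    using cong_sym[OF assms(1)] by (rule cong_mult_left)
  finally show ?thesis
    by (metis mult.assoc power_Suc2)
qed

lemma drazin_power_eq_mult_power:
  assumes "x * y \<sim> y * x" and "x ^ m * y * x \<sim> x ^ m"
  shows "x ^ m \<sim> y * x ^ Suc m"
proof -
  have "x ^ m \<sim> x ^ m * y * x"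
    using assms(2) by (rule cong_sym)
  also have "\<dots> \<sim> y * x ^ m * x"
    using assms(1) by (intro cong_mult_right cong_power_commute)
  finally show ?thesis
    by (metis mult.assoc power_Suc2)
qed

lemma drazin_cong_unique:
  assumes y: "x * y \<sim> y * x" "y * x * y \<sim> y" "x ^ k * y * x \<sim> x ^ k"
    and z: "x * z \<sim> z * x" "z * x * z \<sim> z" "x ^ l * z * x \<sim> x ^ l"
  shows "y \<sim> z"
proof -
  define m where "m = max k l"
  have ym: "x ^ m * y * x \<sim> x ^ m" and zm: "x ^ m * z * x \<sim> x ^ m"
    using drazin_index_mono y(3) z(3) by (simp_all add: m_def)
  have "y \<sim> y ^ Suc m * x ^ m"
    using y(1,2) by (rule drazin_eq_power_mult_power)
  also have "\<dots> \<sim> y ^ Suc m * (x ^ Suc m * z)"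
    using drazin_power_eq_power_mult[OF z(1) zm] by (rule cong_mult_left)
  also have "\<dots> = y ^ Suc m * x ^ Suc m * z"
    by (simp add: mult.assoc)
  also have "\<dots> \<sim> y * x * z"
    using drazin_power_mult_power_eq[OF y(1,2)] by (rule cong_mult_right)
  finally have y_eq: "y \<sim> y * x * z" .
  have zx: "z * x \<sim> x * z"
    using z(1) by (rule cong_sym)
  have "z \<sim> z ^ Suc m * x ^ m"
    using z(1,2) by (rule drazin_eq_power_mult_power)
  also have "\<dots> \<sim> x ^ m * z ^ Suc m"
    using cong_powers_commute[OF zx] .
  also have "\<dots> \<sim> y * x ^ Suc m * z ^ Suc m"
    using drazin_power_eq_mult_power[OF y(1) ym] by (rule cong_mult_right)
  also have "\<dots> = y * (x ^ Suc m * z ^ Suc m)"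
    by (simp add: mult.assoc)
  also have "\<dots> \<sim> y * (z ^ Suc m * x ^ Suc m)"
    using cong_powers_commute[OF z(1)] by (rule cong_mult_left)
  also have "\<dots> \<sim> y * (z * x)"
    using drazin_power_mult_power_eq[OF z(1,2)] by (rule cong_mult_left)
  also have "\<dots> \<sim> y * x * z"
    using zx by (simp add: cong_mult_left mult.assoc)
  finally have "y * x * z \<sim> z"
    by (rule cong_sym)
  with y_eq show ?thesis
    by (rule cong_trans)
qed

end

lemma scaleC_minus_one: "scaleC (-1) u = - u"
  using scaleR_scaleC[of "-1" u] by simp

lemma alg_ideal_imp_ring_ideal: "alg_ideal J \<Longrightarrow> ring_ideal J"
  unfolding alg_ideal_def ring_ideal_def by (simp flip: scaleC_minus_one)

lemma drazin_inverse_mod_unique: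
  assumes "alg_ideal J" "drazin_inverse_mod J x y" "drazin_inverse_mod J x z"
  shows "y - z \<in> J"
proof -
  interpret ring_ideal J
    using assms(1) by (rule alg_ideal_imp_ring_ideal)
  obtain k where "x * y \<sim> y * x" "y * x * y \<sim> y" "x ^ k * y * x \<sim> x ^ k"
    using assms(2) by (auto simp: drazin_inverse_mod_def cong_def)
  moreover obtain l where "x * z \<sim> z * x" "z * x * z \<sim> z" "x ^ l * z * x \<sim> x ^ l"
    using assms(3) by (auto simp: drazin_inverse_mod_def cong_def)
  ultimately show ?thesis
    using drazin_cong_unique by (simp add: cong_def)
qed

lemma trace_diff:
  assumes "alg_ideal J" "is_trace J \<tau>" "u \<in> J" "v \<in> J"
  shows "\<tau> (u - v) = \<tau> u - \<tau> v"
proof -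
  have "- v \<in> J"
    using alg_ideal_imp_ring_ideal[OF assms(1)] assms(4) by (rule ring_ideal.uminus_mem)
  moreover have "\<tau> (- v) = - \<tau> v"
    using assms(2,4) scaleC_minus_one unfolding is_trace_def by (metis mult_minus1)
  moreover have "\<tau> (u + - v) = \<tau> u + \<tau> (- v)"
    using assms(2,3) \<open>- v \<in> J\<close> unfolding is_trace_def by blast
  ultimately show ?thesis
    by simp
qed

lemma trace_commutator_eq_0:
  assumes "alg_ideal J" "is_trace J \<tau>" "d \<in> J"
  shows "\<tau> (a * d - d * a) = 0"
proof -
  have "a * d \<in> J" "d * a \<in> J"
    using assms(1,3) by (simp_all add: alg_ideal_def)
  moreover have "\<tau> (d * a) = \<tau> (a * d)"
    using assms(2,3) unfolding is_trace_def by blast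
  ultimately show ?thesis
    using trace_diff[OF assms(1,2)] by simp
qed

theorem theorem2p3:
  fixes J :: "'a::complex_banach_algebra_1 set" and \<tau> :: "'a \<Rightarrow> complex" and a :: 'a
  assumes "semi_prime TYPE('a)"
    and "alg_ideal J"
    and "is_trace J \<tau>"
    and "B_Fredholm_mod J a"
  shows "(\<forall>a0. drazin_inverse_mod J a a0 \<longrightarrow> a * a0 - a0 * a \<in> J)
       \<and> (\<forall>a0 a1. drazin_inverse_mod J a a0 \<longrightarrow> drazin_inverse_mod J a a1 \<longrightarrow>
            \<tau> (a * a0 - a0 * a) = \<tau> (a * a1 - a1 * a))"
proof -
  have commutator_mem: "a * a0 - a0 * a \<in> J" if "drazin_inverse_mod J a a0" for a0
    using that by (auto simp: drazin_inverse_mod_def)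
  have "\<tau> (a * a0 - a0 * a) = \<tau> (a * a1 - a1 * a)"
    if a0: "drazin_inverse_mod J a a0" and a1: "drazin_inverse_mod J a a1" for a0 a1
  proof -
    define d where "d = a0 - a1"
    have d: "d \<in> J"
      unfolding d_def using drazin_inverse_mod_unique[OF assms(2) a0 a1] .
    have "a * a0 - a0 * a = (a * a1 - a1 * a) + (a * d - d * a)"
      by (simp add: d_def algebra_simps)
    moreover have "a * d - d * a \<in> J"
      using alg_ideal_imp_ring_ideal[OF assms(2)] d
      by (intro ring_ideal.diff_mem ring_ideal.mult_left_mem ring_ideal.mult_right_mem)
    moreover have "\<tau> (u + v) = \<tau> u + \<tau> v" if "u \<in> J" "v \<in> J" for u v
      using assms(3) that unfolding is_trace_def by blast
    ultimately show ?thesis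
      using commutator_mem[OF a1] trace_commutator_eq_0[OF assms(2,3) d] by simp
  qed
  then show ?thesis
    using commutator_mem by blast
qed

end
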